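(* Let $n\in\mathbb N$ and $t\in(0,\frac{1}{n+1})$. Then \[ R_{n,t}=\sum_{i=1}^{n+1}\left(1-\frac{2L_{n,i}}{t}\right)\mathbf 1\{L_{n,i}\le t\}, \] and in particular $|R_{n,t}|\le K_{n,t}$ almost surely.
   Context: Kakutani's interval-splitting process: let $U_1,U_2,\dots$ be i.i.d. uniform random variables on $[0,1]$. At time $0$ the partition of $[0,1]$ consists of the single interval $[0,1]$. Given the partition at time $n\in\mathbb Z_+$ (which consists of $n+1$ intervals, whose lengths are a.s. distinct), let $[a,b]$ be the interval of maximal length; the partition at time $n+1$ is obtained by replacing $[a,b]$ by the two intervals $[a,a+U_{n+1}(b-a)]$ and $[a+U_{n+1}(b-a),b]$. $L_{n,1},\dots,L_{n,n+1}$ are the interval lengths at time $n$, $M_n$ their maximum, $\mathcal F_n:=\sigma(U_1,\dots,U_n)$, $N_t:=\inf\{n\in\mathbb Z_+:M_n\le t\}$ for $t>0$, and $R_{n,t}:=\mathbb E(N_t\mid\mathcal F_n)-\mathbb E N_t$. $K_{n,t}:=\sum_{i=1}^{n+1}\mathbf 1\{0<L_{n,i}\le t\}$. *)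

theory Defs
  imports "HOL-Probability.Probability"
begin

text \<open>Kakutani's interval splitting, tracked through the list of interval lengths.
  The argument u is the driving sequence; u (Suc n) plays the role of U_{n+1}
  (u 0 is unused).\<close>

fun kak_lengths :: "(nat \<Rightarrow> real) \<Rightarrow> nat \<Rightarrow> real list" where
  "kak_lengths u 0 = [1]"
| "kak_lengths u (Suc n) =
     (let ls = kak_lengths u n; m = Max (set ls); i = (LEAST j. j < length ls \<and> ls ! j = m)
      in take i ls @ [u (Suc n) * m, (1 - u (Suc n)) * m] @ drop (Suc i) ls)"

definition kak_L :: "(nat \<Rightarrow> real) \<Rightarrow> nat \<Rightarrow> nat \<Rightarrow> real" where
  "kak_L u n i = kak_lengths u n ! (i - 1)"

definition kak_M :: "(nat \<Rightarrow> real) \<Rightarrow> nat \<Rightarrow> real" where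
  "kak_M u n = Max (set (kak_lengths u n))"

definition kak_N :: "(nat \<Rightarrow> real) \<Rightarrow> real \<Rightarrow> nat" where
  "kak_N u t = (LEAST n. kak_M u n \<le> t)"

definition kak_K :: "(nat \<Rightarrow> real) \<Rightarrow> nat \<Rightarrow> real \<Rightarrow> nat" where
  "kak_K u n t = card {i \<in> {1..n+1}. 0 < kak_L u n i \<and> kak_L u n i \<le> t}"

definition gen_filtr :: "'a measure \<Rightarrow> (nat \<Rightarrow> 'a \<Rightarrow> real) \<Rightarrow> nat \<Rightarrow> 'a measure" where
  "gen_filtr M U n = sigma (space M)
     {U i -` A \<inter> space M | i A. i \<in> {1..n} \<and> A \<in> sets borel}"

end

theory Submission
  imports Defs
begin

text \<open>Let \<open>\<phi>\<^sub>t(x) = (2x/t - 1)[x > t]\<close> (\<open>exp_splits\<close>), the expected number of splits Kakutani's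
  process needs to cut an interval of length \<open>x\<close> into pieces of length at most \<open>t\<close>, and let
  \<open>Y\<^sub>k = #{j < k. M\<^sub>j > t} + \<Sum>\<^sub>i \<phi>\<^sub>t(L\<^sub>k\<^sub>,\<^sub>i)\<close> (\<open>kak_mart\<close>).  Splitting an interval of length \<open>m > t\<close> at a
  uniform point \<open>v\<close> adds \<open>1\<close> to the first term and \<open>\<phi>\<^sub>t(vm) + \<phi>\<^sub>t((1-v)m) - \<phi>\<^sub>t(m)\<close> to the second,
  which has mean \<open>1 + 2(m/t - 1) - (2m/t - 1) = 0\<close>; as \<open>U\<^sub>k\<^sub>+\<^sub>1\<close> is independent of \<open>F\<^sub>k\<close>,
  \<open>Y\<close> is an \<open>F\<close>-martingale with \<open>E Y\<^sub>k = Y\<^sub>0 = 2/t - 1\<close>.  Since \<open>Y\<^sub>k \<ge> k\<close> on \<open>{N\<^sub>t = \<infinity>}\<close>, the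
  stopping time \<open>N\<^sub>t\<close> is a.s. finite, and \<open>Y\<^sub>k = N\<^sub>t\<close> for \<open>k \<ge> N\<^sub>t\<close>; monotone convergence for
  the first term and dominated convergence for the second give \<open>E(N\<^sub>t | F\<^sub>n) = Y\<^sub>n\<close>.
  Finally, \<open>t < 1/(n+1) \<le> M\<^sub>j\<close> for \<open>j < n\<close> and \<open>\<Sum>\<^sub>i L\<^sub>n\<^sub>,\<^sub>i = 1\<close> turn \<open>Y\<^sub>n - (2/t - 1)\<close> into
  the stated sum.\<close>

section \<open>The interval lengths along one path\<close>

definition first_max_index :: "real list \<Rightarrow> nat" where
  "first_max_index ls = (LEAST j. j < length ls \<and> ls ! j = Max (set ls))"

lemma first_max_index:
  assumes "ls \<noteq> []"
  shows "first_max_index ls < length ls" "ls ! first_max_index ls = Max (set ls)"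
proof -
  have "Max (set ls) \<in> set ls" using assms by simp
  then have "\<exists>j. j < length ls \<and> ls ! j = Max (set ls)" by (metis in_set_conv_nth)
  from LeastI_ex[OF this] show "first_max_index ls < length ls" "ls ! first_max_index ls = Max (set ls)"
    unfolding first_max_index_def by auto
qed

lemma kak_lengths_Suc:
  "kak_lengths u (Suc n) =
     take (first_max_index (kak_lengths u n)) (kak_lengths u n)
     @ [u (Suc n) * kak_M u n, (1 - u (Suc n)) * kak_M u n]
     @ drop (Suc (first_max_index (kak_lengths u n))) (kak_lengths u n)"
  by (simp add: first_max_index_def kak_M_def Let_def)

declare kak_lengths.simps(2)[simp del]

lemma length_kak_lengths [simp]: "length (kak_lengths u n) = Suc n"
proof (induction n)
  case 0
  then show ?case by simp
next
  case (Suc n)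
  then have "kak_lengths u n \<noteq> []" by auto
  from first_max_index(1)[OF this] Suc show ?case by (simp add: kak_lengths_Suc)
qed

lemma kak_lengths_not_Nil: "kak_lengths u n \<noteq> []"
  using length_kak_lengths[of u n] by (metis list.size(3) nat.distinct(1))

lemma kak_lengths_cong:
  assumes "\<And>j. u (Suc j) = u' (Suc j)"
  shows "kak_lengths u n = kak_lengths u' n"
  by (induction n) (auto simp: kak_lengths_Suc kak_M_def assms)

lemma kak_M_in_set: "kak_M u n \<in> set (kak_lengths u n)"
  unfolding kak_M_def using kak_lengths_not_Nil by auto

lemma kak_lengths_le_kak_M: "x \<in> set (kak_lengths u n) \<Longrightarrow> x \<le> kak_M u n"
  unfolding kak_M_def by simp

lemma sum_list_map_replace_nth:
  fixes g :: "'a \<Rightarrow> 'b::ab_group_add"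
  assumes "i < length ls"
  shows "sum_list (map g (take i ls @ [a, b] @ drop (Suc i) ls)) =
         sum_list (map g ls) - g (ls ! i) + g a + g b"
proof -
  have "ls = take i ls @ ls ! i # drop (Suc i) ls"
    using assms by (simp add: id_take_nth_drop)
  then have "sum_list (map g ls) =
      sum_list (map g (take i ls)) + g (ls ! i) + sum_list (map g (drop (Suc i) ls))"
    by (metis add.assoc list.simps(9) map_append sum_list.Cons sum_list_append)
  then show ?thesis by (simp add: algebra_simps)
qed

lemma sum_list_map_kak_lengths_Suc:
  fixes g :: "real \<Rightarrow> 'b::ab_group_add"
  shows "sum_list (map g (kak_lengths u (Suc n))) =
    sum_list (map g (kak_lengths u n)) - g (kak_M u n)
      + g (u (Suc n) * kak_M u n) + g ((1 - u (Suc n)) * kak_M u n)"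
  unfolding kak_lengths_Suc
  using sum_list_map_replace_nth[OF first_max_index(1)[OF kak_lengths_not_Nil], of g u n]
    first_max_index(2)[OF kak_lengths_not_Nil, of u n]
  by (simp add: kak_M_def)

lemma set_kak_lengths_Suc:
  "set (kak_lengths u (Suc n)) \<subseteq>
     set (kak_lengths u n) \<union> {u (Suc n) * kak_M u n, (1 - u (Suc n)) * kak_M u n}"
  unfolding kak_lengths_Suc
  using set_take_subset[of _ "kak_lengths u n"] set_drop_subset[of _ "kak_lengths u n"] by auto

definition unit_valued :: "(nat \<Rightarrow> real) \<Rightarrow> bool" where
  "unit_valued u \<longleftrightarrow> (\<forall>j. 0 \<le> u (Suc j) \<and> u (Suc j) \<le> 1)"

lemma kak_lengths_nonneg:
  assumes "unit_valued u" "x \<in> set (kak_lengths u n)"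
  shows "0 \<le> x"
  using assms(2)
proof (induction n arbitrary: x)
  case 0
  then show ?case by simp
next
  case (Suc n)
  have "0 \<le> kak_M u n" using Suc.IH kak_M_in_set by blast
  moreover have "0 \<le> u (Suc n)" "u (Suc n) \<le> 1" using assms(1) unfolding unit_valued_def by auto
  ultimately show ?case using Suc set_kak_lengths_Suc[of u n] by auto
qed

lemma kak_lengths_pos:
  assumes "\<And>j. 0 < u (Suc j) \<and> u (Suc j) < 1" "x \<in> set (kak_lengths u n)"
  shows "0 < x"
  using assms(2)
proof (induction n arbitrary: x)
  case 0
  then show ?case by simp
next
  case (Suc n)
  have "0 < kak_M u n" using Suc.IH kak_M_in_set by blast
  moreover have "0 < u (Suc n)" "u (Suc n) < 1" using assms(1) by auto
  ultimately show ?case using Suc set_kak_lengths_Suc[of u n] by auto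
qed

lemma kak_M_nonneg: "unit_valued u \<Longrightarrow> 0 \<le> kak_M u n"
  using kak_lengths_nonneg kak_M_in_set by blast

lemma split_pieces_le_kak_M:
  assumes "unit_valued u"
  shows "u (Suc n) * kak_M u n \<le> kak_M u n" "(1 - u (Suc n)) * kak_M u n \<le> kak_M u n"
proof -
  have "0 \<le> u (Suc n)" "u (Suc n) \<le> 1" using assms unfolding unit_valued_def by auto
  with kak_M_nonneg[OF assms, of n] show
    "u (Suc n) * kak_M u n \<le> kak_M u n" "(1 - u (Suc n)) * kak_M u n \<le> kak_M u n"
    by (simp_all add: mult_left_le_one_le)
qed

lemma sum_list_kak_lengths: "sum_list (kak_lengths u n) = 1"
proof (induction n)
  case 0
  then show ?case by simp
next
  case (Suc n)
  then show ?case using sum_list_map_kak_lengths_Suc[of "\<lambda>x. x" u n] by (simp add: algebra_simps)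
qed

lemma kak_M_Suc_le:
  assumes "unit_valued u"
  shows "kak_M u (Suc n) \<le> kak_M u n"
  using set_kak_lengths_Suc[of u n] kak_M_in_set[of u "Suc n"] kak_lengths_le_kak_M[of _ u n]
    split_pieces_le_kak_M[OF assms, of n]
  by auto

lemma kak_M_antimono:
  assumes "unit_valued u" "j \<le> k"
  shows "kak_M u k \<le> kak_M u j"
  using assms(2)
proof (induction k)
  case 0
  then show ?case by simp
next
  case (Suc k)
  then show ?case using kak_M_Suc_le[OF assms(1), of k] by (cases "j = Suc k") auto
qed

lemma kak_M_le_1: "unit_valued u \<Longrightarrow> kak_M u n \<le> 1"
  using kak_M_antimono[of u 0 n] by (simp add: kak_M_def)

lemma inverse_Suc_le_kak_M: "1 / real (Suc n) \<le> kak_M u n"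
proof -
  have "1 = sum_list (kak_lengths u n)" by (simp add: sum_list_kak_lengths)
  also have "\<dots> \<le> sum_list (map (\<lambda>x. kak_M u n) (kak_lengths u n))"
    using sum_list_mono[of "kak_lengths u n" "\<lambda>x. x"] kak_lengths_le_kak_M by simp
  also have "\<dots> = real (Suc n) * kak_M u n" by (simp add: sum_list_triv)
  finally show ?thesis by (simp add: field_simps)
qed

definition kak_terminates :: "(nat \<Rightarrow> real) \<Rightarrow> real \<Rightarrow> bool" where
  "kak_terminates u t \<longleftrightarrow> (\<exists>k. kak_M u k \<le> t)"

lemma kak_M_le_iff_kak_N_le:
  assumes "unit_valued u" "kak_terminates u t"
  shows "kak_M u k \<le> t \<longleftrightarrow> kak_N u t \<le> k"
proof
  assume "kak_M u k \<le> t"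
  then show "kak_N u t \<le> k" unfolding kak_N_def by (rule Least_le)
next
  assume "kak_N u t \<le> k"
  have "kak_M u (kak_N u t) \<le> t"
    using assms(2) unfolding kak_N_def kak_terminates_def by (rule LeastI_ex)
  then show "kak_M u k \<le> t" using kak_M_antimono[OF assms(1) \<open>kak_N u t \<le> k\<close>] by linarith
qed

lemma kak_N_cong: "kak_lengths u = kak_lengths u' \<Longrightarrow> kak_N u t = kak_N u' t"
  unfolding kak_N_def kak_M_def by (simp only:)

section \<open>The martingale\<close>

definition exp_splits :: "real \<Rightarrow> real \<Rightarrow> real" where
  "exp_splits t x = (if t < x then 2 * x / t - 1 else 0)"

definition splits_before :: "real \<Rightarrow> (nat \<Rightarrow> real) \<Rightarrow> nat \<Rightarrow> real" where
  "splits_before t u k = (\<Sum>j<k. if t < kak_M u j then 1 else 0)"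

definition pending_splits :: "real \<Rightarrow> (nat \<Rightarrow> real) \<Rightarrow> nat \<Rightarrow> real" where
  "pending_splits t u k = sum_list (map (exp_splits t) (kak_lengths u k))"

definition kak_mart :: "real \<Rightarrow> (nat \<Rightarrow> real) \<Rightarrow> nat \<Rightarrow> real" where
  "kak_mart t u k = splits_before t u k + pending_splits t u k"

definition mart_increment :: "real \<Rightarrow> real \<Rightarrow> real \<Rightarrow> real" where
  "mart_increment t m v = 1 + exp_splits t (v * m) + exp_splits t ((1 - v) * m) - exp_splits t m"

lemma exp_splits_nonneg: "0 < t \<Longrightarrow> 0 \<le> exp_splits t x"
  unfolding exp_splits_def by (auto simp: field_simps)

lemma exp_splits_le: "0 < t \<Longrightarrow> 0 \<le> x \<Longrightarrow> exp_splits t x \<le> 2 * x / t"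
  unfolding exp_splits_def by (auto simp: field_simps)

lemma exp_splits_eq_0: "x \<le> t \<Longrightarrow> exp_splits t x = 0"
  unfolding exp_splits_def by auto

lemma kak_mart_cong: "kak_lengths u = kak_lengths u' \<Longrightarrow> kak_mart t u k = kak_mart t u' k"
  unfolding kak_mart_def splits_before_def pending_splits_def kak_M_def by (simp only:)

lemma kak_mart_Suc:
  assumes "unit_valued u"
  shows "kak_mart t u (Suc k) - kak_mart t u k =
    (if t < kak_M u k then mart_increment t (kak_M u k) (u (Suc k)) else 0)"
proof -
  have "pending_splits t u (Suc k) = pending_splits t u k - exp_splits t (kak_M u k)
      + exp_splits t (u (Suc k) * kak_M u k) + exp_splits t ((1 - u (Suc k)) * kak_M u k)"
    unfolding pending_splits_def by (rule sum_list_map_kak_lengths_Suc)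
  moreover have "splits_before t u (Suc k) = splits_before t u k + (if t < kak_M u k then 1 else 0)"
    unfolding splits_before_def by simp
  moreover have "exp_splits t (u (Suc k) * kak_M u k) = 0"
    "exp_splits t ((1 - u (Suc k)) * kak_M u k) = 0" "exp_splits t (kak_M u k) = 0"
    if "\<not> t < kak_M u k"
    using that split_pieces_le_kak_M[OF assms, of k] by (auto intro!: exp_splits_eq_0)
  ultimately show ?thesis unfolding kak_mart_def mart_increment_def by auto
qed

lemma kak_mart_0: "t < 1 \<Longrightarrow> kak_mart t u 0 = 2 / t - 1"
  unfolding kak_mart_def splits_before_def pending_splits_def exp_splits_def by simp

lemma pending_splits_nonneg: "0 < t \<Longrightarrow> 0 \<le> pending_splits t u k"
  unfolding pending_splits_def by (auto intro!: sum_list_nonneg exp_splits_nonneg)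

lemma pending_splits_le:
  assumes "unit_valued u" "0 < t"
  shows "pending_splits t u k \<le> 2 / t"
proof -
  have "pending_splits t u k \<le> sum_list (map (\<lambda>x. 2 / t * x) (kak_lengths u k))"
    unfolding pending_splits_def using kak_lengths_nonneg[OF assms(1)] exp_splits_le[OF assms(2)]
    by (intro sum_list_mono) auto
  also have "\<dots> = 2 / t"
    using sum_list_const_mult[of "2 / t" "\<lambda>x. x"] sum_list_kak_lengths[of u k] by simp
  finally show ?thesis .
qed

lemma pending_splits_eq_0:
  assumes "kak_M u k \<le> t"
  shows "pending_splits t u k = 0"
proof -
  have "map (exp_splits t) (kak_lengths u k) = map (\<lambda>_. 0) (kak_lengths u k)"
    using assms by (auto intro!: exp_splits_eq_0 dest!: kak_lengths_le_kak_M)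
  then show ?thesis unfolding pending_splits_def by (simp only: sum_list_triv)
qed

lemma splits_before_nonneg: "0 \<le> splits_before t u k"
  unfolding splits_before_def by (auto intro!: sum_nonneg)

lemma splits_before_le: "splits_before t u k \<le> real k"
  unfolding splits_before_def using sum_mono[of "{..<k}" _ "\<lambda>_. 1::real"] by simp

lemma splits_before_mono: "j \<le> k \<Longrightarrow> splits_before t u j \<le> splits_before t u k"
  unfolding splits_before_def by (intro sum_mono2) auto

lemma splits_before_eq_min:
  assumes "unit_valued u" "kak_terminates u t"
  shows "splits_before t u k = real (min k (kak_N u t))"
proof -
  have "splits_before t u k = (\<Sum>j<k. if j < kak_N u t then 1 else 0)"
    unfolding splits_before_def using kak_M_le_iff_kak_N_le[OF assms]
    by (intro sum.cong) (auto simp: not_less[symmetric])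
  also have "\<dots> = real (card ({..<k} \<inter> {j. j < kak_N u t}))"
    by (simp add: sum.If_cases)
  also have "{..<k} \<inter> {j. j < kak_N u t} = {..<min k (kak_N u t)}" by auto
  finally show ?thesis by simp
qed

lemma splits_before_nonterminating: "\<not> kak_terminates u t \<Longrightarrow> splits_before t u k = real k"
  unfolding splits_before_def kak_terminates_def by (simp add: not_le)

lemma pending_splits_terminated:
  "unit_valued u \<Longrightarrow> kak_terminates u t \<Longrightarrow> kak_N u t \<le> k \<Longrightarrow> pending_splits t u k = 0"
  using kak_M_le_iff_kak_N_le by (blast intro: pending_splits_eq_0)

lemma kak_mart_nonneg: "0 < t \<Longrightarrow> 0 \<le> kak_mart t u k"
  unfolding kak_mart_def using splits_before_nonneg pending_splits_nonneg by (simp add: add_nonneg_nonneg)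

lemma sum_list_map_conv_sum_atLeast1: "sum_list (map h ls) = (\<Sum>i = 1..length ls. h (ls ! (i - 1)))"
  by (simp add: sum_list_sum_nth sum.atLeast1_atMost_eq atLeast0LessThan)

lemma kak_mart_minus_initial:
  assumes "t < 1 / real (Suc n)"
  shows "kak_mart t u n - (2 / t - 1) =
    (\<Sum>i = 1..n+1. (1 - 2 * kak_L u n i / t) * (if kak_L u n i \<le> t then 1 else 0))"
proof -
  have "t < kak_M u j" if "j < n" for j
  proof -
    have "1 / real (Suc n) \<le> 1 / real (Suc j)" using that by (simp add: frac_le)
    then show ?thesis using inverse_Suc_le_kak_M[of j u] assms by linarith
  qed
  then have "splits_before t u n = real n" unfolding splits_before_def by simp
  moreover have "exp_splits t = (\<lambda>x. 2 * x / t - 1 + (1 - 2 * x / t) * (if x \<le> t then 1 else 0))"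
    unfolding exp_splits_def by auto
  moreover have "sum_list (map (\<lambda>x. 2 * x / t) ls) = 2 * sum_list ls / t" for ls
    by (induction ls) (simp_all add: add_divide_distrib)
  ultimately show ?thesis
    unfolding kak_mart_def pending_splits_def
    by (simp add: sum_list_addf sum_list_subtractf sum_list_triv sum_list_kak_lengths
        sum_list_map_conv_sum_atLeast1[of _ "kak_lengths u n"] kak_L_def)
qed

lemma abs_sum_le_kak_K:
  assumes "\<And>j. 0 < u (Suc j) \<and> u (Suc j) < 1"
  shows "\<bar>\<Sum>i = 1..n+1. (1 - 2 * kak_L u n i / t) * (if kak_L u n i \<le> t then 1 else 0)\<bar>
    \<le> real (kak_K u n t)"
proof -
  have pos: "0 < kak_L u n i" if "i \<in> {1..n+1}" for i
    unfolding kak_L_def using that by (intro kak_lengths_pos[of u _ n, OF assms]) auto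
  have "\<bar>\<Sum>i = 1..n+1. (1 - 2 * kak_L u n i / t) * (if kak_L u n i \<le> t then 1 else 0)\<bar>
     \<le> (\<Sum>i = 1..n+1. \<bar>(1 - 2 * kak_L u n i / t) * (if kak_L u n i \<le> t then 1 else 0)\<bar>)"
    by (rule sum_abs)
  also have "\<dots> \<le> (\<Sum>i = 1..n+1. if 0 < kak_L u n i \<and> kak_L u n i \<le> t then 1 else 0)"
  proof (rule sum_mono)
    fix i
    assume "i \<in> {1..n+1}"
    then have "0 < kak_L u n i" by (rule pos)
    moreover have "0 < t" if "kak_L u n i \<le> t" using that \<open>0 < kak_L u n i\<close> by linarith
    ultimately show "\<bar>(1 - 2 * kak_L u n i / t) * (if kak_L u n i \<le> t then 1 else 0)\<bar>
        \<le> (if 0 < kak_L u n i \<and> kak_L u n i \<le> t then 1 else 0)"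
      by (auto simp: field_simps abs_le_iff)
  qed
  also have "\<dots> = real (card ({1..n+1} \<inter> {i. 0 < kak_L u n i \<and> kak_L u n i \<le> t}))"
    by (simp only: of_bool_def[symmetric] sum_of_bool_eq finite_atLeastAtMost)
  also have "\<dots> = real (kak_K u n t)"
    unfolding kak_K_def by (rule arg_cong[where f="\<lambda>A. real (card A)"]) blast
  finally show ?thesis .
qed

section \<open>The increment has mean zero\<close>

lemma exp_splits_measurable [measurable]: "exp_splits t \<in> borel_measurable borel"
  unfolding exp_splits_def by measurable

lemma mart_increment_measurable [measurable]:
  "(\<lambda>(m, v). mart_increment t m v) \<in> borel_measurable (borel \<Otimes>\<^sub>M borel)"
  unfolding mart_increment_def by measurable

lemma has_bochner_integral_exp_splits_scaled:
  assumes "0 < t" "t < m"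
  shows "has_bochner_integral lborel (\<lambda>v. exp_splits t (v * m) * indicator {0..1} v) (m / t - 1)"
proof -
  have "AE v in lborel.
      exp_splits t (v * m) * indicator {0..1} v = (2 * m * v / t - 1) * indicator {t/m..1} v"
    using AE_lborel_singleton[of "t/m"]
  proof eventually_elim
    case (elim v)
    have "t < v * m \<longleftrightarrow> t / m < v" using assms by (simp add: field_simps)
    moreover have "0 < t / m" using assms by simp
    ultimately show ?case
      using elim unfolding exp_splits_def by (auto simp: indicator_def algebra_simps)
  qed
  moreover have "has_bochner_integral lborel (\<lambda>v. (2 * m * v / t - 1) * indicator {t/m..1} v)
      ((m * 1\<^sup>2 / t - 1) - (m * (t/m)\<^sup>2 / t - t/m))"
    using assms
    by (intro has_bochner_integral_FTC_Icc_real)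
       (auto intro!: derivative_eq_intros continuous_intros simp: field_simps)
  moreover have "(m * 1\<^sup>2 / t - 1) - (m * (t/m)\<^sup>2 / t - t/m) = m / t - 1"
    using assms by (simp add: field_simps power2_eq_square)
  ultimately show ?thesis
    by (subst has_bochner_integral_cong_AE) auto
qed

lemma has_bochner_integral_exp_splits_scaled_reflected:
  assumes "0 < t" "t < m"
  shows "has_bochner_integral lborel (\<lambda>v. exp_splits t ((1 - v) * m) * indicator {0..1} v) (m / t - 1)"
proof -
  let ?f = "\<lambda>v. exp_splits t (v * m) * indicator {0..1} v"
  have reflect: "(\<lambda>v. exp_splits t ((1 - v) * m) * indicator {0..1} v) = (\<lambda>v. ?f (1 + (-1) * v))"
    by (auto simp: indicator_def)
  show ?thesis
    using has_bochner_integral_exp_splits_scaled[OF assms]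
      lborel_integrable_real_affine_iff[of "-1" ?f 1] lborel_integral_real_affine[of "-1" ?f 1]
    unfolding reflect has_bochner_integral_iff by simp
qed

lemma has_bochner_integral_mart_increment:
  assumes "0 < t" "t < m"
  shows "has_bochner_integral lborel (\<lambda>v. mart_increment t m v * indicator {0..1} v) 0"
proof -
  have "(\<lambda>v. mart_increment t m v * indicator {0..1} v) =
      (\<lambda>v. indicator {0..1} v + exp_splits t (v * m) * indicator {0..1} v
        + exp_splits t ((1 - v) * m) * indicator {0..1} v - indicator {0..1} v * exp_splits t m)"
    by (auto simp: mart_increment_def fun_eq_iff algebra_simps split: split_indicator)
  moreover have "has_bochner_integral lborel (\<lambda>v. indicator {0..1} v + exp_splits t (v * m) * indicator {0..1} v
        + exp_splits t ((1 - v) * m) * indicator {0..1} v - indicator {0..1} v * exp_splits t m)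
      (1 + (m / t - 1) + (m / t - 1) - 1 * exp_splits t m)"
    using has_bochner_integral_real_indicator[of "{0..1::real}" lborel]
      has_bochner_integral_exp_splits_scaled[OF assms]
      has_bochner_integral_exp_splits_scaled_reflected[OF assms]
    by (intro has_bochner_integral_diff has_bochner_integral_add has_bochner_integral_mult_left) auto
  moreover have "1 + (m / t - 1) + (m / t - 1) - 1 * exp_splits t m = 0"
    unfolding exp_splits_def using assms by simp
  ultimately show ?thesis by simp
qed

lemma abs_mart_increment_le:
  assumes "0 < t" "0 \<le> m" "m \<le> 1" "0 \<le> v" "v \<le> 1"
  shows "\<bar>mart_increment t m v\<bar> \<le> 1 + 6 / t"
proof -
  have bound: "0 \<le> exp_splits t x \<and> exp_splits t x \<le> 2 / t" if "0 \<le> x" "x \<le> 1" for x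
    using exp_splits_nonneg[OF assms(1)] exp_splits_le[OF assms(1) that(1)]
      divide_right_mono[of "2 * x" 2 t] that assms(1)
    by fastforce
  have "0 \<le> v * m" "v * m \<le> 1" "0 \<le> (1 - v) * m" "(1 - v) * m \<le> 1"
    using assms by (auto intro: mult_le_one)
  then show ?thesis
    using bound[of "v * m"] bound[of "(1 - v) * m"] bound[of m] assms
    unfolding mart_increment_def abs_le_iff by linarith
qed

definition clamp01 :: "real \<Rightarrow> real" where
  "clamp01 v = max 0 (min 1 v)"

lemma clamp01_measurable [measurable]: "clamp01 \<in> borel_measurable borel"
  unfolding clamp01_def by measurable

definition clamped_increment :: "real \<Rightarrow> real \<times> real \<Rightarrow> real" where
  "clamped_increment t = (\<lambda>(m, v). if t < m \<and> m \<le> 1 then mart_increment t m (clamp01 v) else 0)"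

lemma clamped_increment_measurable [measurable]:
  "clamped_increment t \<in> borel_measurable (borel \<Otimes>\<^sub>M borel)"
  using measurable_compose[OF _ mart_increment_measurable, of "\<lambda>(m, v). (m, clamp01 v)"]
  unfolding clamped_increment_def by (simp add: case_prod_beta) measurable

lemma abs_clamped_increment_le: "0 < t \<Longrightarrow> \<bar>clamped_increment t (m, v)\<bar> \<le> 1 + 6 / t"
  unfolding clamped_increment_def using abs_mart_increment_le[of t m "clamp01 v"]
  by (auto simp: clamp01_def)

lemma lebesgue_integral_clamped_increment:
  assumes "0 < t"
  shows "(LBINT v. clamped_increment t (m, v) * indicator {0..1} v) = 0"
proof (cases "t < m \<and> m \<le> 1")
  case True
  then have "(\<lambda>v. clamped_increment t (m, v) * indicator {0..1} v) =
      (\<lambda>v. mart_increment t m v * indicator {0..1} v)"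
    by (auto simp: clamped_increment_def clamp01_def indicator_def)
  then show ?thesis
    using has_bochner_integral_integral_eq[OF has_bochner_integral_mart_increment[OF assms, of m]] True
    by simp
next
  case False
  then have "clamped_increment t (m, v) = 0" for v by (auto simp: clamped_increment_def)
  then show ?thesis by simp
qed

lemma kak_M_eq_Max_nth: "kak_M u n = Max ((\<lambda>i. kak_lengths u n ! i) ` {..n})"
proof -
  have "set (kak_lengths u n) = (\<lambda>i. kak_lengths u n ! i) ` {..<Suc n}"
    by (metis map_nth set_map set_upt length_kak_lengths atLeast0LessThan)
  then show ?thesis unfolding kak_M_def by (simp add: lessThan_Suc_atMost)
qed

lemma nth_kak_lengths_Suc:
  assumes "p \<le> Suc n"
  shows "kak_lengths u (Suc n) ! p =
    (if p < first_max_index (kak_lengths u n) then kak_lengths u n ! (min p n)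
     else if p = first_max_index (kak_lengths u n) then u (Suc n) * kak_M u n
     else if p = Suc (first_max_index (kak_lengths u n)) then (1 - u (Suc n)) * kak_M u n
     else kak_lengths u n ! (p - 1))"
  using assms first_max_index(1)[OF kak_lengths_not_Nil, of u n]
  unfolding kak_lengths_Suc
  by (auto simp: nth_append min_def intro!: arg_cong[where f="(!) (kak_lengths u n)"])

lemma measurable_nth_kak_lengths:
  fixes u :: "'a \<Rightarrow> nat \<Rightarrow> real"
  assumes "\<And>j. j < n \<Longrightarrow> (\<lambda>\<omega>. u \<omega> (Suc j)) \<in> borel_measurable N" "p \<le> n"
  shows "(\<lambda>\<omega>. kak_lengths (u \<omega>) n ! p) \<in> borel_measurable N"
  using assms
proof (induction n arbitrary: p)
  case 0
  then show ?case by simp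
next
  case (Suc n)
  have IH: "(\<lambda>\<omega>. kak_lengths (u \<omega>) n ! q) \<in> borel_measurable N" if "q \<le> n" for q
    using Suc that by auto
  have M: "(\<lambda>\<omega>. kak_M (u \<omega>) n) \<in> borel_measurable N"
    unfolding kak_M_eq_Max_nth by (rule borel_measurable_Max) (auto intro: IH)
  have "(\<lambda>\<omega>. j < Suc n \<and> kak_lengths (u \<omega>) n ! j = kak_M (u \<omega>) n) \<in> measurable N (count_space UNIV)"
    for j
    using IH[of j] M by (cases "j < Suc n") (simp_all, measurable)
  then have I: "(\<lambda>\<omega>. first_max_index (kak_lengths (u \<omega>) n)) \<in> measurable N (count_space UNIV)"
    unfolding first_max_index_def kak_M_def[symmetric] length_kak_lengths
    by (rule measurable_Least)
  have "(\<lambda>\<omega>. kak_lengths (u \<omega>) n ! (min p n)) \<in> borel_measurable N"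
    "(\<lambda>\<omega>. kak_lengths (u \<omega>) n ! (p - 1)) \<in> borel_measurable N"
    "(\<lambda>\<omega>. u \<omega> (Suc n)) \<in> borel_measurable N"
    using Suc.prems by (auto intro: IH)
  with I M show ?case
    unfolding nth_kak_lengths_Suc[OF Suc.prems(2)] by measurable
qed

lemma measurable_kak_M:
  fixes u :: "'a \<Rightarrow> nat \<Rightarrow> real"
  assumes "\<And>j. j < n \<Longrightarrow> (\<lambda>\<omega>. u \<omega> (Suc j)) \<in> borel_measurable N"
  shows "(\<lambda>\<omega>. kak_M (u \<omega>) n) \<in> borel_measurable N"
  unfolding kak_M_eq_Max_nth
  using measurable_nth_kak_lengths[of n u N, OF assms] by (intro borel_measurable_Max) auto

lemma measurable_kak_mart:
  fixes u :: "'a \<Rightarrow> nat \<Rightarrow> real"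
  assumes "\<And>j. j < n \<Longrightarrow> (\<lambda>\<omega>. u \<omega> (Suc j)) \<in> borel_measurable N"
  shows "(\<lambda>\<omega>. splits_before t (u \<omega>) n) \<in> borel_measurable N"
    "(\<lambda>\<omega>. pending_splits t (u \<omega>) n) \<in> borel_measurable N"
    "(\<lambda>\<omega>. kak_mart t (u \<omega>) n) \<in> borel_measurable N"
proof -
  have [measurable]: "(\<lambda>\<omega>. kak_M (u \<omega>) j) \<in> borel_measurable N" if "j < n" for j
    using assms that by (intro measurable_kak_M) auto
  show C: "(\<lambda>\<omega>. splits_before t (u \<omega>) n) \<in> borel_measurable N"
    unfolding splits_before_def by (intro borel_measurable_sum) measurable
  have "pending_splits t (u \<omega>) n = (\<Sum>i\<le>n. exp_splits t (kak_lengths (u \<omega>) n ! i))" for \<omega>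
    unfolding pending_splits_def sum_list_sum_nth by (simp add: atLeast0LessThan lessThan_Suc_atMost)
  then show S: "(\<lambda>\<omega>. pending_splits t (u \<omega>) n) \<in> borel_measurable N"
    using measurable_nth_kak_lengths[of n u N, OF assms] by simp
  show "(\<lambda>\<omega>. kak_mart t (u \<omega>) n) \<in> borel_measurable N"
    unfolding kak_mart_def using C S by measurable
qed

lemma measurable_kak_N:
  fixes u :: "'a \<Rightarrow> nat \<Rightarrow> real"
  assumes "\<And>j. (\<lambda>\<omega>. u \<omega> (Suc j)) \<in> borel_measurable N"
  shows "(\<lambda>\<omega>. real (kak_N (u \<omega>) t)) \<in> borel_measurable N"
proof -
  have [measurable]: "(\<lambda>\<omega>. kak_M (u \<omega>) k) \<in> borel_measurable N" for k
    using assms by (rule measurable_kak_M)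
  have "(\<lambda>\<omega>. kak_N (u \<omega>) t) \<in> measurable N (count_space UNIV)"
    unfolding kak_N_def by (rule measurable_Least) measurable
  then show ?thesis by measurable
qed

lemma integral_indicator_space_mult:
  fixes f :: "'a \<Rightarrow> real"
  shows "(\<integral>x. indicator (space M) x * f x \<partial>M) = (\<integral>x. f x \<partial>M)"
  by (rule Bochner_Integration.integral_cong) auto

lemma integrable_indicator_space_mult_iff:
  fixes f :: "'a \<Rightarrow> real"
  shows "integrable M (\<lambda>x. indicator (space M) x * f x) \<longleftrightarrow> integrable M f"
  by (rule Bochner_Integration.integrable_cong) auto

lemma lebesgue_integral_uniform_01:
  fixes h :: "real \<Rightarrow> real"
  assumes [measurable]: "h \<in> borel_measurable borel"
  shows "integral\<^sup>L (uniform_measure lborel {0..1}) h = (LBINT v. h v * indicator {0..1} v)"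
proof -
  have "uniform_measure lborel {0..1::real} = density lborel (\<lambda>x. ennreal (indicator {0..1} x))"
    unfolding uniform_measure_def by (intro density_cong) (auto simp: indicator_def)
  then show ?thesis by (simp add: integral_density mult.commute)
qed

lemma (in prob_space) integral_indep_uniform_eq_0:
  fixes W V :: "'a \<Rightarrow> real" and g :: "real \<times> real \<Rightarrow> real"
  assumes ind: "indep_var borel W borel V"
    and dV: "distr M borel V = uniform_measure lborel {0..1}"
    and g[measurable]: "g \<in> borel_measurable (borel \<Otimes>\<^sub>M borel)" and gb: "\<And>x v. \<bar>g (x, v)\<bar> \<le> B"
    and g0: "\<And>x. (LBINT v. g (x, v) * indicator {0..1} v) = 0"
  shows "(\<integral>\<omega>. g (W \<omega>, V \<omega>) \<partial>M) = 0"
proof -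
  have rv: "random_variable borel W" "random_variable borel V"
    and joint: "distr M borel W \<Otimes>\<^sub>M distr M borel V = distr M (borel \<Otimes>\<^sub>M borel) (\<lambda>x. (W x, V x))"
    using ind unfolding indep_var_distribution_eq by auto
  interpret PW: prob_space "distr M borel W" using rv by (intro prob_space_distr) auto
  interpret PV: prob_space "distr M borel V" using rv by (intro prob_space_distr) auto
  interpret PP: pair_prob_space "distr M borel W" "distr M borel V" ..
  have "(\<integral>\<omega>. g (W \<omega>, V \<omega>) \<partial>M) = integral\<^sup>L (distr M borel W \<Otimes>\<^sub>M distr M borel V) g"
    using rv by (simp add: joint integral_distr)
  also have "\<dots> = (\<integral>x. (\<integral>v. g (x, v) \<partial>distr M borel V) \<partial>distr M borel W)"
    by (rule PP.integral_fst'[symmetric], rule PP.integrable_const_bound[where B=B]) (auto simp: gb)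
  also have "\<dots> = 0"
    by (simp add: dV lebesgue_integral_uniform_01 g0)
  finally show ?thesis .
qed

section \<open>The process driven by independent uniforms\<close>

locale kakutani_process = prob_space M for M :: "'a measure" +
  fixes U :: "nat \<Rightarrow> 'a \<Rightarrow> real" and t :: real
  assumes distr_U: "\<And>i. i \<ge> 1 \<Longrightarrow> distr M lborel (U i) = uniform_measure lborel {0..1}"
    and measurable_U: "\<And>i. i \<ge> 1 \<Longrightarrow> U i \<in> borel_measurable M"
    and indep_U: "indep_vars (\<lambda>_. borel) U {1..}"
    and t_pos: "0 < t" and t_less_1: "t < 1"
begin

abbreviation F :: "nat \<Rightarrow> 'a measure" where
  "F k \<equiv> gen_filtr M U k"

text \<open>Clamping to \<open>[0, 1]\<close> changes the paths only on a null set, but makes every path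
  \<^const>\<open>unit_valued\<close>, so that the bounds on the martingale hold pointwise.\<close>

definition Uc :: "'a \<Rightarrow> nat \<Rightarrow> real" where
  "Uc \<omega> j = (if j = 0 then 0 else clamp01 (U j \<omega>))"

definition generators :: "nat \<Rightarrow> 'a set set" where
  "generators k = {U i -` A \<inter> space M | i A. i \<in> {1..k} \<and> A \<in> sets borel}"

lemma space_F [simp]: "space (F k) = space M"
  unfolding gen_filtr_def by (simp add: space_measure_of_conv)

lemma sets_F: "sets (F k) = sigma_sets (space M) (generators k)"
  unfolding gen_filtr_def generators_def[symmetric]
  by (rule sets_measure_of) (auto simp: generators_def)

lemma sets_F_subset: "sets (F k) \<subseteq> sets M"
  unfolding sets_F using measurable_U by (intro sets.sigma_sets_subset) (auto simp: generators_def)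

lemma subalgebra_F: "subalgebra M (F k)"
  unfolding subalgebra_def using sets_F_subset by simp

lemma sets_F_mono: "n \<le> k \<Longrightarrow> sets (F n) \<subseteq> sets (F k)"
  unfolding sets_F generators_def by (intro sigma_sets_mono') force

lemma U_measurable_F:
  assumes "1 \<le> i" "i \<le> k"
  shows "U i \<in> borel_measurable (F k)"
proof (rule measurableI)
  fix A :: "real set"
  assume "A \<in> sets borel"
  then have "U i -` A \<inter> space M \<in> generators k" unfolding generators_def using assms by auto
  then show "U i -` A \<inter> space (F k) \<in> sets (F k)" unfolding sets_F by auto
qed auto

lemma Uc_measurable_F: "j < k \<Longrightarrow> (\<lambda>\<omega>. Uc \<omega> (Suc j)) \<in> borel_measurable (F k)"
  using U_measurable_F[of "Suc j" k] unfolding Uc_def by simp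

lemma Uc_measurable: "(\<lambda>\<omega>. Uc \<omega> (Suc j)) \<in> borel_measurable M"
  using measurable_U[of "Suc j"] unfolding Uc_def by simp

lemma unit_valued_Uc: "unit_valued (Uc \<omega>)"
  unfolding unit_valued_def Uc_def clamp01_def by auto

lemma integrable_splits_before: "integrable M (\<lambda>\<omega>. splits_before t (Uc \<omega>) k)"
  using splits_before_nonneg splits_before_le measurable_kak_mart(1)[where u=Uc, OF Uc_measurable]
  by (intro integrable_const_bound[where B="real k"]) auto

lemma integrable_pending_splits: "integrable M (\<lambda>\<omega>. pending_splits t (Uc \<omega>) k)"
  using pending_splits_nonneg[OF t_pos] pending_splits_le[OF unit_valued_Uc t_pos]
    measurable_kak_mart(2)[where u=Uc, OF Uc_measurable] t_pos
  by (intro integrable_const_bound[where B="2 / t"]) auto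

lemma integrable_kak_mart: "integrable M (\<lambda>\<omega>. kak_mart t (Uc \<omega>) k)"
  unfolding kak_mart_def using integrable_splits_before integrable_pending_splits
  by (rule Bochner_Integration.integrable_add)

lemma indep_F_U_Suc:
  "indep_set (sets (F k)) (sigma_sets (space M) {U (Suc k) -` A \<inter> space M | A. A \<in> sets borel})"
proof -
  let ?E = "\<lambda>i. {U i -` A \<inter> space M | A. A \<in> sets borel}"
  define I where "I = (\<lambda>b::bool. if b then {1..k} else {Suc k})"
  have "indep_sets ?E {1..}"
    using indep_U unfolding indep_vars_def2 by (rule conjunct2)
  then have "indep_sets ?E (\<Union>b. I b)"
    by (rule indep_sets_mono_index[rotated]) (auto simp: I_def)
  then have "indep_sets (\<lambda>b. sigma_sets (space M) (\<Union>i\<in>I b. ?E i)) UNIV"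
  proof (rule indep_sets_collect_sigma)
    show "Int_stable (?E i)" for i
    proof (rule Int_stableI)
      fix a b
      assume "a \<in> ?E i" "b \<in> ?E i"
      then obtain A B where "a = U i -` A \<inter> space M" "b = U i -` B \<inter> space M"
        and "A \<in> sets borel" "B \<in> sets borel"
        by blast
      then show "a \<inter> b \<in> ?E i" by (auto intro!: exI[of _ "A \<inter> B"])
    qed
    show "disjoint_family I"
      unfolding disjoint_family_on_def I_def by auto
  qed
  moreover have "(\<Union>i\<in>{1..k}. ?E i) = generators k"
    unfolding generators_def by blast
  then have "sigma_sets (space M) (\<Union>i\<in>I b. ?E i) =
      case_bool (sets (F k)) (sigma_sets (space M) (?E (Suc k))) b" for b
    by (cases b) (simp_all add: I_def sets_F)
  ultimately show ?thesis
    unfolding indep_set_def by (simp only:)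
qed

lemma indep_var_F_measurable_U_Suc:
  assumes W: "W \<in> borel_measurable (F k)"
  shows "indep_var borel W borel (U (Suc k))"
proof -
  have "sigma_sets (space M) {W -` A \<inter> space M | A. A \<in> sets borel} \<subseteq> sets (F k)"
    using sets.sigma_sets_subset[of "{W -` A \<inter> space M | A. A \<in> sets borel}" "F k"]
      measurable_sets[OF W] by auto
  then have "indep_set (sigma_sets (space M) {W -` A \<inter> space M | A. A \<in> sets borel})
      (sigma_sets (space M) {U (Suc k) -` A \<inter> space M | A. A \<in> sets borel})"
    using indep_F_U_Suc[of k] unfolding indep_set_def
    by (elim indep_sets_mono_sets) (auto split: bool.split)
  then show ?thesis
    unfolding indep_var_eq using measurable_from_subalg[OF subalgebra_F W] measurable_U[of "Suc k"]
    by simp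
qed

lemma distr_U_Suc: "distr M borel (U (Suc k)) = uniform_measure lborel {0..1}"
  using distr_U[of "Suc k"] distr_cong[of M M borel lborel "U (Suc k)"] by simp

lemma set_integral_kak_mart_increment:
  assumes [measurable]: "A \<in> sets (F k)"
  shows "(\<integral>\<omega>. indicator A \<omega> * (kak_mart t (Uc \<omega>) (Suc k) - kak_mart t (Uc \<omega>) k) \<partial>M) = 0"
proof -
  define W where "W \<omega> = indicator A \<omega> * (if t < kak_M (Uc \<omega>) k then kak_M (Uc \<omega>) k else 0)" for \<omega>
  \<comment> \<open>\<open>W\<close> vanishes off \<open>A\<close> and where \<open>M\<^sub>k \<le> t\<close>, and \<open>clamped_increment t (0, v) = 0\<close>,
    so the increment on \<open>A\<close> is a function of the \<open>F\<^sub>k\<close>-measurable \<open>W\<close> and of \<open>U\<^sub>k\<^sub>+\<^sub>1\<close>.\<close>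
  have [measurable]: "(\<lambda>\<omega>. kak_M (Uc \<omega>) k) \<in> borel_measurable (F k)"
    using Uc_measurable_F by (rule measurable_kak_M[where u=Uc])
  have "W \<in> borel_measurable (F k)" unfolding W_def by measurable
  then have "(\<integral>\<omega>. clamped_increment t (W \<omega>, U (Suc k) \<omega>) \<partial>M) = 0"
    using abs_clamped_increment_le[OF t_pos] lebesgue_integral_clamped_increment[OF t_pos]
    by (intro integral_indep_uniform_eq_0[OF indep_var_F_measurable_U_Suc distr_U_Suc]) auto
  moreover have "indicator A \<omega> * (kak_mart t (Uc \<omega>) (Suc k) - kak_mart t (Uc \<omega>) k) =
      clamped_increment t (W \<omega>, U (Suc k) \<omega>)" for \<omega>
    using kak_M_le_1[OF unit_valued_Uc, of \<omega> k] t_pos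
    unfolding kak_mart_Suc[OF unit_valued_Uc] W_def clamped_increment_def
    by (auto simp: indicator_def Uc_def)
  ultimately show ?thesis by simp
qed

lemma set_integral_kak_mart_eq:
  assumes A: "A \<in> sets (F n)" and "n \<le> k"
  shows "(\<integral>\<omega>. indicator A \<omega> * kak_mart t (Uc \<omega>) k \<partial>M) = (\<integral>\<omega>. indicator A \<omega> * kak_mart t (Uc \<omega>) n \<partial>M)"
  using \<open>n \<le> k\<close>
proof (induction k)
  case 0
  then show ?case by simp
next
  case (Suc k)
  show ?case
  proof (cases "n = Suc k")
    case False
    then have "n \<le> k" using Suc by simp
    have AM: "A \<in> sets M" using A sets_F_subset by blast
    have "(\<integral>\<omega>. indicator A \<omega> * kak_mart t (Uc \<omega>) (Suc k) \<partial>M) - (\<integral>\<omega>. indicator A \<omega> * kak_mart t (Uc \<omega>) k \<partial>M)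
        = (\<integral>\<omega>. indicator A \<omega> * (kak_mart t (Uc \<omega>) (Suc k) - kak_mart t (Uc \<omega>) k) \<partial>M)"
      using integrable_mult_indicator[OF AM integrable_kak_mart] by (simp add: right_diff_distrib)
    also have "\<dots> = 0"
      using A sets_F_mono[OF \<open>n \<le> k\<close>] by (intro set_integral_kak_mart_increment) blast
    finally show ?thesis using Suc.IH[OF \<open>n \<le> k\<close>] by simp
  qed simp
qed

lemma integral_kak_mart: "(\<integral>\<omega>. kak_mart t (Uc \<omega>) k \<partial>M) = 2 / t - 1"
proof -
  have "space M \<in> sets (F 0)" using sets.top[of "F 0"] by simp
  then have "(\<integral>\<omega>. indicator (space M) \<omega> * kak_mart t (Uc \<omega>) k \<partial>M) =
      (\<integral>\<omega>. indicator (space M) \<omega> * kak_mart t (Uc \<omega>) 0 \<partial>M)"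
    by (rule set_integral_kak_mart_eq) simp
  then show ?thesis
    unfolding integral_indicator_space_mult kak_mart_0[OF t_less_1] by (simp add: prob_space)
qed

lemma AE_kak_terminates: "AE \<omega> in M. kak_terminates (Uc \<omega>) t"
proof -
  define B where "B = {\<omega> \<in> space M. \<not> kak_terminates (Uc \<omega>) t}"
  have [measurable]: "(\<lambda>\<omega>. kak_M (Uc \<omega>) k) \<in> borel_measurable M" for k
    using Uc_measurable by (rule measurable_kak_M[where u=Uc])
  have B[measurable]: "B \<in> sets M" unfolding B_def kak_terminates_def by measurable
  have bound: "real k * prob B \<le> 2 / t - 1" for k
  proof -
    have "real k * prob B = (\<integral>\<omega>. real k * indicator B \<omega> \<partial>M)" by simp
    also have "\<dots> \<le> (\<integral>\<omega>. kak_mart t (Uc \<omega>) k \<partial>M)"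
    proof (rule integral_mono[OF _ integrable_kak_mart])
      show "integrable M (\<lambda>\<omega>. real k * indicator B \<omega>)"
        using integrable_mult_indicator[OF B integrable_const[of "real k"]] by (simp add: mult.commute)
      show "real k * indicator B \<omega> \<le> kak_mart t (Uc \<omega>) k" for \<omega>
        using kak_mart_nonneg[OF t_pos] pending_splits_nonneg[OF t_pos]
          splits_before_nonterminating[of "Uc \<omega>" t k]
        by (auto simp: B_def kak_mart_def indicator_def)
    qed
    also have "\<dots> = 2 / t - 1" by (rule integral_kak_mart)
    finally show ?thesis .
  qed
  have "prob B = 0"
  proof (rule ccontr)
    assume "prob B \<noteq> 0"
    then have "0 < prob B" using measure_nonneg[of M B] by linarith
    moreover obtain k :: nat where "(2 / t - 1) / prob B < real k" using reals_Archimedean2 by blast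
    ultimately show False using bound[of k] by (simp add: field_simps)
  qed
  then show ?thesis
    using AE_iff_measurable[OF B] B_def by (auto simp: emeasure_eq_measure)
qed

lemma set_integral_pending_splits_tendsto_0:
  assumes [measurable]: "A \<in> sets M"
  shows "(\<lambda>k. \<integral>\<omega>. indicator A \<omega> * pending_splits t (Uc \<omega>) k \<partial>M) \<longlonglongrightarrow> 0"
proof -
  have "(\<lambda>k. \<integral>\<omega>. indicator A \<omega> * pending_splits t (Uc \<omega>) k \<partial>M) \<longlonglongrightarrow> (\<integral>\<omega>. 0 \<partial>M)"
  proof (rule integral_dominated_convergence[where w="\<lambda>\<omega>. 2 / t"])
    show "(\<lambda>\<omega>. indicator A \<omega> * pending_splits t (Uc \<omega>) k) \<in> borel_measurable M" for k
      using measurable_kak_mart(2)[where u=Uc, OF Uc_measurable] by measurable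
    show "AE \<omega> in M. norm (indicator A \<omega> * pending_splits t (Uc \<omega>) k) \<le> 2 / t" for k
      using pending_splits_nonneg[OF t_pos] pending_splits_le[OF unit_valued_Uc t_pos] t_pos
      by (intro AE_I2) (simp add: indicator_def)
    show "AE \<omega> in M. (\<lambda>k. indicator A \<omega> * pending_splits t (Uc \<omega>) k) \<longlonglongrightarrow> 0"
      using AE_kak_terminates
    proof eventually_elim
      case (elim \<omega>)
      have "eventually (\<lambda>k. indicator A \<omega> * pending_splits t (Uc \<omega>) k = 0) sequentially"
        using eventually_ge_at_top[of "kak_N (Uc \<omega>) t"]
        by eventually_elim (simp add: pending_splits_terminated[OF unit_valued_Uc elim])
      then show ?case by (rule tendsto_eventually)
    qed
  qed simp_all
  then show ?thesis by simp
qed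

lemma set_integral_splits_before_tendsto:
  assumes A: "A \<in> sets (F n)"
  shows "(\<lambda>k. \<integral>\<omega>. indicator A \<omega> * splits_before t (Uc \<omega>) k \<partial>M) \<longlonglongrightarrow>
    (\<integral>\<omega>. indicator A \<omega> * kak_mart t (Uc \<omega>) n \<partial>M)"
proof -
  have AM: "A \<in> sets M" using A sets_F_subset by blast
  let ?T = "\<integral>\<omega>. indicator A \<omega> * kak_mart t (Uc \<omega>) n \<partial>M"
  let ?C = "\<lambda>k. \<integral>\<omega>. indicator A \<omega> * splits_before t (Uc \<omega>) k \<partial>M"
  let ?S = "\<lambda>k. \<integral>\<omega>. indicator A \<omega> * pending_splits t (Uc \<omega>) k \<partial>M"
  have "?C k = ?T - ?S k" if "n \<le> k" for k
  proof -
    have "?C k + ?S k = (\<integral>\<omega>. indicator A \<omega> * kak_mart t (Uc \<omega>) k \<partial>M)"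
      using integrable_mult_indicator[OF AM integrable_splits_before]
        integrable_mult_indicator[OF AM integrable_pending_splits]
      unfolding kak_mart_def by (simp add: distrib_left)
    then show ?thesis using set_integral_kak_mart_eq[OF A that] by simp
  qed
  then have "eventually (\<lambda>k. ?T - ?S k = ?C k) sequentially"
    by (intro eventually_mono[OF eventually_ge_at_top[of n]]) simp
  moreover have "(\<lambda>k. ?T - ?S k) \<longlonglongrightarrow> ?T"
    using tendsto_diff[OF tendsto_const set_integral_pending_splits_tendsto_0[OF AM]] by simp
  ultimately show ?thesis
    by (rule Lim_transform_eventually[rotated])
qed

lemma set_integral_kak_N:
  assumes A: "A \<in> sets (F n)"
  shows "integrable M (\<lambda>\<omega>. indicator A \<omega> * real (kak_N (Uc \<omega>) t))"
    "(\<integral>\<omega>. indicator A \<omega> * real (kak_N (Uc \<omega>) t) \<partial>M) = (\<integral>\<omega>. indicator A \<omega> * kak_mart t (Uc \<omega>) n \<partial>M)"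
proof -
  have AM[measurable]: "A \<in> sets M" using A sets_F_subset by blast
  define C where "C k \<omega> = indicator A \<omega> * splits_before t (Uc \<omega>) k" for k \<omega>
  have integrable_C: "integrable M (C k)" for k
    unfolding C_def using integrable_mult_indicator[OF AM integrable_splits_before] by simp
  have mono: "AE \<omega> in M. mono (\<lambda>k. C k \<omega>)"
    unfolding C_def using splits_before_mono
    by (intro AE_I2 monoI) (auto simp: indicator_def)
  have nonneg: "AE \<omega> in M. 0 \<le> C k \<omega>" for k
    unfolding C_def using splits_before_nonneg by simp
  have lim: "AE \<omega> in M. (\<lambda>k. C k \<omega>) \<longlonglongrightarrow> indicator A \<omega> * real (kak_N (Uc \<omega>) t)"
    using AE_kak_terminates
  proof eventually_elim
    case (elim \<omega>)
    have "eventually (\<lambda>k. C k \<omega> = indicator A \<omega> * real (kak_N (Uc \<omega>) t)) sequentially"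
      using eventually_ge_at_top[of "kak_N (Uc \<omega>) t"]
      by eventually_elim (simp add: C_def splits_before_eq_min[OF unit_valued_Uc elim])
    then show ?case by (rule tendsto_eventually)
  qed
  have lim_integral: "(\<lambda>k. integral\<^sup>L M (C k)) \<longlonglongrightarrow> (\<integral>\<omega>. indicator A \<omega> * kak_mart t (Uc \<omega>) n \<partial>M)"
    unfolding C_def by (rule set_integral_splits_before_tendsto[OF A])
  have "(\<lambda>\<omega>. indicator A \<omega> * real (kak_N (Uc \<omega>) t)) \<in> borel_measurable M"
    using measurable_kak_N[where u=Uc, OF Uc_measurable] by measurable
  from integral_monotone_convergence_nonneg[OF integrable_C mono nonneg lim lim_integral this]
  show "integrable M (\<lambda>\<omega>. indicator A \<omega> * real (kak_N (Uc \<omega>) t))"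
    "(\<integral>\<omega>. indicator A \<omega> * real (kak_N (Uc \<omega>) t) \<partial>M) = (\<integral>\<omega>. indicator A \<omega> * kak_mart t (Uc \<omega>) n \<partial>M)"
    by auto
qed

lemma AE_U_in_open_unit: "AE \<omega> in M. \<forall>j. 0 < U (Suc j) \<omega> \<and> U (Suc j) \<omega> < 1"
proof (subst AE_all_countable, intro allI)
  fix j
  have "AE x in lborel. x \<in> {0..1::real} \<longrightarrow> 0 < x \<and> x < 1"
    using AE_lborel_singleton[of 0] AE_lborel_singleton[of 1] by eventually_elim auto
  then have "AE x in uniform_measure lborel {0..1::real}. 0 < x \<and> x < 1"
    by (subst AE_uniform_measure) auto
  then have "AE x in distr M borel (U (Suc j)). 0 < x \<and> x < 1"
    unfolding distr_U_Suc .
  then show "AE \<omega> in M. 0 < U (Suc j) \<omega> \<and> U (Suc j) \<omega> < 1"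
    using measurable_U[of "Suc j"] by (rule AE_distrD[rotated]) simp
qed

lemma AE_kak_lengths_Uc: "AE \<omega> in M. kak_lengths (Uc \<omega>) = kak_lengths (\<lambda>i. U i \<omega>)"
  using AE_U_in_open_unit
proof eventually_elim
  case (elim \<omega>)
  have "Uc \<omega> (Suc j) = U (Suc j) \<omega>" for j
    using elim[rule_format, of j] by (simp add: Uc_def clamp01_def)
  then show ?case by (intro ext kak_lengths_cong)
qed

lemma AE_kak_N_Uc: "AE \<omega> in M. kak_N (Uc \<omega>) t = kak_N (\<lambda>i. U i \<omega>) t"
  using AE_kak_lengths_Uc by eventually_elim (rule kak_N_cong)

lemma measurable_kak_N_U: "(\<lambda>\<omega>. real (kak_N (\<lambda>i. U i \<omega>) t)) \<in> borel_measurable M"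
  using measurable_U by (intro measurable_kak_N) simp

lemma set_integral_kak_N_U:
  assumes A: "A \<in> sets (F n)"
  shows "integrable M (\<lambda>\<omega>. indicator A \<omega> * real (kak_N (\<lambda>i. U i \<omega>) t))"
    "(\<integral>\<omega>. indicator A \<omega> * real (kak_N (\<lambda>i. U i \<omega>) t) \<partial>M) =
      (\<integral>\<omega>. indicator A \<omega> * kak_mart t (Uc \<omega>) n \<partial>M)"
proof -
  have [measurable]: "A \<in> sets M" using A sets_F_subset by blast
  have ae: "AE \<omega> in M.
      indicator A \<omega> * real (kak_N (Uc \<omega>) t) = indicator A \<omega> * real (kak_N (\<lambda>i. U i \<omega>) t)"
    using AE_kak_N_Uc by eventually_elim simp
  have meas_Uc: "(\<lambda>\<omega>. indicator A \<omega> * real (kak_N (Uc \<omega>) t)) \<in> borel_measurable M"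
    using measurable_kak_N[where u=Uc, OF Uc_measurable] by measurable
  have meas_U: "(\<lambda>\<omega>. indicator A \<omega> * real (kak_N (\<lambda>i. U i \<omega>) t)) \<in> borel_measurable M"
    using measurable_kak_N_U by measurable
  show "integrable M (\<lambda>\<omega>. indicator A \<omega> * real (kak_N (\<lambda>i. U i \<omega>) t))"
    by (rule integrable_cong_AE_imp[OF set_integral_kak_N(1)[OF A] meas_U ae])
  show "(\<integral>\<omega>. indicator A \<omega> * real (kak_N (\<lambda>i. U i \<omega>) t) \<partial>M) =
      (\<integral>\<omega>. indicator A \<omega> * kak_mart t (Uc \<omega>) n \<partial>M)"
    using integral_cong_AE[OF meas_Uc meas_U ae, symmetric] set_integral_kak_N(2)[OF A]
    by (rule trans)
qed

lemma cond_exp_kak_N: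
  "AE \<omega> in M. real_cond_exp M (F n) (\<lambda>\<omega>. real (kak_N (\<lambda>i. U i \<omega>) t)) \<omega> = kak_mart t (Uc \<omega>) n"
proof -
  interpret S: sigma_finite_subalgebra M "F n"
    by (rule finite_measure_subalgebra_is_sigma_finite) (unfold_locales, rule subalgebra_F)
  show ?thesis
  proof (rule S.real_cond_exp_charact)
    show "(\<integral>\<omega>\<in>A. real (kak_N (\<lambda>i. U i \<omega>) t) \<partial>M) = (\<integral>\<omega>\<in>A. kak_mart t (Uc \<omega>) n \<partial>M)"
      if "A \<in> sets (F n)" for A
      unfolding set_lebesgue_integral_def using set_integral_kak_N_U(2)[OF that] by simp
    have "space M \<in> sets (F n)" using sets.top[of "F n"] by simp
    from set_integral_kak_N_U(1)[OF this]
    show "integrable M (\<lambda>\<omega>. real (kak_N (\<lambda>i. U i \<omega>) t))"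
      unfolding integrable_indicator_space_mult_iff .
    show "integrable M (\<lambda>\<omega>. kak_mart t (Uc \<omega>) n)" by (rule integrable_kak_mart)
    show "(\<lambda>\<omega>. kak_mart t (Uc \<omega>) n) \<in> borel_measurable (F n)"
      using Uc_measurable_F by (rule measurable_kak_mart(3)[where u=Uc])
  qed
qed

lemma expectation_kak_N: "expectation (\<lambda>\<omega>. real (kak_N (\<lambda>i. U i \<omega>) t)) = 2 / t - 1"
proof -
  have "space M \<in> sets (F 0)" using sets.top[of "F 0"] by simp
  from set_integral_kak_N_U(2)[OF this] show ?thesis
    unfolding integral_indicator_space_mult integral_kak_mart .
qed

end

theorem lemma4p5:
  fixes M :: "'a measure" and U :: "nat \<Rightarrow> 'a \<Rightarrow> real" and n :: nat and t :: real
  assumes "prob_space M"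
    and "\<And>i. i \<ge> 1 \<Longrightarrow> distr M lborel (U i) = uniform_measure lborel {0..1}"
    and "\<And>i. i \<ge> 1 \<Longrightarrow> U i \<in> borel_measurable M"
    and "prob_space.indep_vars M (\<lambda>_. borel) U {1..}"
    and "0 < t" and "t < 1 / real (n + 1)"
  shows "(AE \<omega> in M.
            real_cond_exp M (gen_filtr M U n) (\<lambda>\<omega>. real (kak_N (\<lambda>i. U i \<omega>) t)) \<omega>
              - prob_space.expectation M (\<lambda>\<omega>. real (kak_N (\<lambda>i. U i \<omega>) t))
            = (\<Sum>i = 1..n+1. (1 - 2 * kak_L (\<lambda>i. U i \<omega>) n i / t)
                 * (if kak_L (\<lambda>i. U i \<omega>) n i \<le> t then 1 else 0)))
       \<and> (AE \<omega> in M.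
            \<bar>real_cond_exp M (gen_filtr M U n) (\<lambda>\<omega>. real (kak_N (\<lambda>i. U i \<omega>) t)) \<omega>
              - prob_space.expectation M (\<lambda>\<omega>. real (kak_N (\<lambda>i. U i \<omega>) t))\<bar>
            \<le> real (kak_K (\<lambda>i. U i \<omega>) n t))"
proof -
  have "1 / real (n + 1) \<le> 1" by simp
  then have "t < 1" using assms(6) by linarith
  interpret kakutani_process M U t
    by (rule kakutani_process.intro[OF assms(1) kakutani_process_axioms.intro[OF assms(2-5) \<open>t < 1\<close>]])
  let ?R = "\<lambda>\<omega>. real_cond_exp M (F n) (\<lambda>\<omega>. real (kak_N (\<lambda>i. U i \<omega>) t)) \<omega>
    - expectation (\<lambda>\<omega>. real (kak_N (\<lambda>i. U i \<omega>) t))"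
  let ?S = "\<lambda>\<omega>. \<Sum>i = 1..n+1. (1 - 2 * kak_L (\<lambda>i. U i \<omega>) n i / t)
    * (if kak_L (\<lambda>i. U i \<omega>) n i \<le> t then 1 else 0)"
  have "AE \<omega> in M. ?R \<omega> = ?S \<omega> \<and> \<bar>?R \<omega>\<bar> \<le> real (kak_K (\<lambda>i. U i \<omega>) n t)"
    using cond_exp_kak_N[of n] AE_kak_lengths_Uc AE_U_in_open_unit
  proof eventually_elim
    case (elim \<omega>)
    have "?R \<omega> = kak_mart t (\<lambda>i. U i \<omega>) n - (2 / t - 1)"
      using elim(1) expectation_kak_N kak_mart_cong[OF elim(2)] by simp
    also have "\<dots> = ?S \<omega>"
      using assms(6) by (intro kak_mart_minus_initial) simp
    finally show ?case using abs_sum_le_kak_K[of "\<lambda>i. U i \<omega>" n t] elim(3) by simp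
  qed
  then show ?thesis unfolding AE_conj_iff .
qed

end
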